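(* Let $M$ be a $\mathscr{D}(R,V)$-module. Set $I=\mathrm{Ann}_R(M)$ and $J = (I:\pi^{\infty}) := \{a\in R\mid a\pi^m\in I \text{ for some integer } m \geq 0\}$. Then $J$ is a $\mathscr{D}(R,V)$-submodule of $R$.
   Context: Let $(V, \pi V, k)$ be a DVR of mixed characteristic $(0,p)$ (i.e. $V$ has characteristic zero, maximal ideal generated by $\pi$, and residue field $k$ of characteristic $p>0$), and let $R$ be either $V[[x_1, \ldots, x_n]]$ or $V[x_1, \ldots, x_n]$ for some $n \geq 0$. $\mathscr{D}(R,V)$ denotes the ring of $V$-linear differential operators on $R$, and $\mathscr{D}(R,V)$-modules are left modules over it. *)

theory Defs
  imports "HOL-Library.Multiset" "HOL-Library.FuncSet"
begin

definition dvr_uniformizer :: "'a::idom \<Rightarrow> bool" where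
  "dvr_uniformizer pi \<longleftrightarrow> pi \<noteq> 0 \<and> \<not> pi dvd 1 \<and>
     (\<forall>a. a \<noteq> 0 \<longrightarrow> (\<exists>u k. u dvd 1 \<and> a = u * pi ^ k))"

definition residue_char :: "'a::idom \<Rightarrow> nat \<Rightarrow> bool" where
  "residue_char pi p \<longleftrightarrow> p > 0 \<and> pi dvd of_nat p \<and>
     (\<forall>q. 0 < q \<and> q < p \<longrightarrow> \<not> pi dvd of_nat q)"

text \<open>Elements are coefficient functions on monomials; a monomial is a multiset of
variable indices.\<close>
type_synonym 'a series = "nat multiset \<Rightarrow> 'a"

definition R_ps :: "nat \<Rightarrow> 'a::comm_ring_1 series set" where
  "R_ps n = {f. \<forall>m. f m \<noteq> 0 \<longrightarrow> set_mset m \<subseteq> {..<n}}"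

definition R_poly :: "nat \<Rightarrow> 'a::comm_ring_1 series set" where
  "R_poly n = {f \<in> R_ps n. finite {m. f m \<noteq> 0}}"

definition s_add :: "'a::comm_ring_1 series \<Rightarrow> 'a series \<Rightarrow> 'a series" where
  "s_add f g = (\<lambda>m. f m + g m)"

definition s_mult :: "'a::comm_ring_1 series \<Rightarrow> 'a series \<Rightarrow> 'a series" where
  "s_mult f g = (\<lambda>m. \<Sum>a\<in>{a. a \<subseteq># m}. f a * g (m - a))"

definition s_const :: "'a::comm_ring_1 \<Rightarrow> 'a series" where
  "s_const c = (\<lambda>m. if m = {#} then c else 0)"

definition V_linear :: "'a::comm_ring_1 series set \<Rightarrow> ('a series \<Rightarrow> 'a series) \<Rightarrow> bool" where
  "V_linear R d \<longleftrightarrow> (\<forall>f\<in>R. d f \<in> R) \<and>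
     (\<forall>f\<in>R. \<forall>g\<in>R. d (s_add f g) = s_add (d f) (d g)) \<and>
     (\<forall>c. \<forall>f\<in>R. d (s_mult (s_const c) f) = s_mult (s_const c) (d f))"

fun diffop :: "'a::comm_ring_1 series set \<Rightarrow> nat \<Rightarrow> ('a series \<Rightarrow> 'a series) \<Rightarrow> bool" where
  "diffop R 0 d \<longleftrightarrow> (\<exists>a\<in>R. \<forall>f\<in>R. d f = s_mult a f)"
| "diffop R (Suc k) d \<longleftrightarrow> V_linear R d \<and>
     (\<forall>r\<in>R. diffop R k (\<lambda>f. s_add (d (s_mult r f)) (\<lambda>m. - (s_mult r (d f)) m)))"

definition Dring :: "'a::comm_ring_1 series set \<Rightarrow> ('a series \<Rightarrow> 'a series) set" where
  "Dring R = {d. d \<in> extensional R \<and> (\<exists>k. diffop R k d)}"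

definition D_add :: "'a::comm_ring_1 series set \<Rightarrow> ('a series \<Rightarrow> 'a series) \<Rightarrow> ('a series \<Rightarrow> 'a series) \<Rightarrow> ('a series \<Rightarrow> 'a series)" where
  "D_add R d e = (\<lambda>f\<in>R. s_add (d f) (e f))"

definition D_mult :: "'a::comm_ring_1 series set \<Rightarrow> ('a series \<Rightarrow> 'a series) \<Rightarrow> ('a series \<Rightarrow> 'a series) \<Rightarrow> ('a series \<Rightarrow> 'a series)" where
  "D_mult R d e = compose R d e"

definition D_one :: "'a::comm_ring_1 series set \<Rightarrow> ('a series \<Rightarrow> 'a series)" where
  "D_one R = (\<lambda>f\<in>R. f)"

definition mult_op :: "'a::comm_ring_1 series set \<Rightarrow> 'a series \<Rightarrow> ('a series \<Rightarrow> 'a series)" where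
  "mult_op R r = (\<lambda>f\<in>R. s_mult r f)"

definition D_module :: "'a::comm_ring_1 series set \<Rightarrow> (('a series \<Rightarrow> 'a series) \<Rightarrow> 'm::ab_group_add \<Rightarrow> 'm) \<Rightarrow> bool" where
  "D_module R act \<longleftrightarrow>
     (\<forall>d\<in>Dring R. \<forall>x y. act d (x + y) = act d x + act d y) \<and>
     (\<forall>d\<in>Dring R. \<forall>e\<in>Dring R. \<forall>x. act (D_add R d e) x = act d x + act e x) \<and>
     (\<forall>d\<in>Dring R. \<forall>e\<in>Dring R. \<forall>x. act (D_mult R d e) x = act d (act e x)) \<and>
     (\<forall>x. act (D_one R) x = x)"

definition Ann_R :: "'a::comm_ring_1 series set \<Rightarrow> (('a series \<Rightarrow> 'a series) \<Rightarrow> 'm::ab_group_add \<Rightarrow> 'm) \<Rightarrow> 'a series set" where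
  "Ann_R R act = {r\<in>R. \<forall>x. act (mult_op R r) x = 0}"

definition saturation :: "'a::comm_ring_1 series set \<Rightarrow> 'a series set \<Rightarrow> 'a \<Rightarrow> 'a series set" where
  "saturation R I pi = {a\<in>R. \<exists>m::nat. s_mult a (s_const (pi ^ m)) \<in> I}"

definition D_submodule :: "'a::comm_ring_1 series set \<Rightarrow> 'a series set \<Rightarrow> bool" where
  "D_submodule R J \<longleftrightarrow> J \<subseteq> R \<and> s_const 0 \<in> J \<and>
     (\<forall>a\<in>J. \<forall>b\<in>J. s_add a b \<in> J) \<and> (\<forall>a\<in>J. (\<lambda>m. - a m) \<in> J) \<and>
     (\<forall>d\<in>Dring R. \<forall>a\<in>J. d a \<in> J)"

end

theory Submission
  imports Defs "HOL-Library.Function_Algebras"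
begin

text \<open>
  As multiplication by \<open>\<partial>\<^sub>i a\<close> is the
  commutator \<open>\<partial>\<^sub>i a - a \<partial>\<^sub>i\<close> in \<open>\<D>(R,V)\<close>, the annihilator \<open>I\<close> is an ideal stable under the partial derivatives, and then
  so is \<open>J\<close>. Over \<open>\<rat>\<close> the operators are generated by \<open>R\<close> and the \<open>\<partial>\<^sub>i\<close>; integrally
  this holds up to integer factors: if \<open>d\<close> has order \<open>\<le> k\<close>, then \<open>k d - \<Sum>\<^sub>i [d, x\<^sub>i] \<partial>\<^sub>i\<close>
  and the \<open>[d, x\<^sub>i]\<close> have order \<open>< k\<close>. (An operator of order \<open>\<le> k + 1\<close> whose commutators
  with all \<open>x\<^sub>j\<close> have order \<open>< k\<close> has order \<open>\<le> k\<close>; for \<open>k = 0\<close> this compares the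
  operator with multiplication by its value at \<open>1\<close>.) By induction on the order,
  \<open>k \<cdot> d(a) \<in> J\<close> for \<open>a \<in> J\<close>. Since \<open>V\<close> has characteristic zero, \<open>k\<close> is a unit times a
  power of \<open>\<pi>\<close>, so \<open>d(a) \<in> J\<close> by saturation.
\<close>

section \<open>Arithmetic of formal power series\<close>

lemma finite_submultisets: "finite {a. a \<subseteq># m}"
proof -
  have "{a. a \<subseteq># m} \<subseteq> mset ` {xs. set xs \<subseteq> set_mset m \<and> length xs \<le> size m}"
  proof
    fix a assume "a \<in> {a. a \<subseteq># m}"
    then have a: "a \<subseteq># m" by simp
    obtain xs where xs: "a = mset xs" using ex_mset by metis
    have "set xs \<subseteq> set_mset m" "length xs \<le> size m"
      using a mset_subset_eqD size_mset_mono by (fastforce simp: xs)+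
    then show "a \<in> mset ` {xs. set xs \<subseteq> set_mset m \<and> length xs \<le> size m}"
      using xs by blast
  qed
  moreover have "finite {xs. set xs \<subseteq> set_mset m \<and> length xs \<le> size m}"
    using finite_lists_length_le by blast
  ultimately show ?thesis
    using finite_surj by blast
qed

definition splits :: "'b multiset \<Rightarrow> ('b multiset \<times> 'b multiset) set" where
  "splits m = {p. fst p + snd p = m}"

lemma finite_splits: "finite (splits m)"
  by (rule finite_subset[of _ "{a. a \<subseteq># m} \<times> {a. a \<subseteq># m}"])
     (auto simp: splits_def finite_submultisets)

lemma s_mult_splits: "s_mult f g m = (\<Sum>p\<in>splits m. f (fst p) * g (snd p))"
proof -
  have "bij_betw (\<lambda>a. (a, m - a)) {a. a \<subseteq># m} (splits m)"
    unfolding bij_betw_def inj_on_def splits_def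
    by (auto simp: image_def subset_mset.add_diff_inverse intro: exI[of _ "fst _"])
  then show ?thesis
    unfolding s_mult_def by (simp add: sum.reindex_bij_betw[symmetric])
qed

lemma s_mult_nonzero_split:
  assumes "s_mult f g m \<noteq> 0"
  obtains a b where "a + b = m" "f a \<noteq> 0" "g b \<noteq> 0"
proof -
  from assms obtain p where "p \<in> splits m" "f (fst p) * g (snd p) \<noteq> 0"
    unfolding s_mult_splits by (meson sum.not_neutral_contains_not_neutral)
  then show ?thesis
    using that[of "fst p" "snd p"] by (auto simp: splits_def dest!: mult_not_zero)
qed

lemma sum_fun_apply: "(\<Sum>i\<in>A. g i) x = (\<Sum>i\<in>A. g i x :: 'b::comm_monoid_add)"
  using sum_comp_morphism[of "\<lambda>f. f x" g A] by (simp add: o_def)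

lemma s_add_eq_plus: "s_add f g = f + g"
  by (simp add: s_add_def fun_eq_iff)

lemma s_mult_commute: "s_mult f g = s_mult g (f::'a::comm_ring_1 series)"
proof
  fix m
  show "s_mult f g m = s_mult g f m"
    unfolding s_mult_splits
    by (rule sum.reindex_bij_witness[where i="\<lambda>p. (snd p, fst p)" and j="\<lambda>p. (snd p, fst p)"])
       (auto simp: splits_def add.commute mult.commute)
qed

lemma s_mult_assoc: "s_mult (s_mult f g) h = s_mult f (s_mult g (h::'a::comm_ring_1 series))"
proof
  fix m
  let ?F = "\<lambda>a b c. f a * g b * h c"
  have "s_mult (s_mult f g) h m = (\<Sum>x\<in>splits m. \<Sum>y\<in>splits (fst x). ?F (fst y) (snd y) (snd x))"
    unfolding s_mult_splits by (simp add: sum_distrib_right)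
  also have "\<dots> = (\<Sum>z\<in>Sigma (splits m) (\<lambda>x. splits (fst x)). ?F (fst (snd z)) (snd (snd z)) (snd (fst z)))"
    by (subst sum.Sigma) (auto simp: finite_splits split_def)
  also have "\<dots> = (\<Sum>z\<in>Sigma (splits m) (\<lambda>x. splits (snd x)). ?F (fst (fst z)) (fst (snd z)) (snd (snd z)))"
    by (rule sum.reindex_bij_witness
          [where j="\<lambda>z. ((fst (snd z), snd (snd z) + snd (fst z)), (snd (snd z), snd (fst z)))"
             and i="\<lambda>z. ((fst (fst z) + fst (snd z), snd (snd z)), (fst (fst z), fst (snd z)))"])
       (auto simp: splits_def add.assoc)
  also have "\<dots> = (\<Sum>x\<in>splits m. \<Sum>y\<in>splits (snd x). ?F (fst x) (fst y) (snd y))"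
    by (subst sum.Sigma) (auto simp: finite_splits split_def)
  also have "\<dots> = s_mult f (s_mult g h) m"
    unfolding s_mult_splits by (simp add: sum_distrib_left mult.assoc)
  finally show "s_mult (s_mult f g) h m = s_mult f (s_mult g h) m" .
qed

lemma s_mult_left_commute: "s_mult f (s_mult g h) = s_mult g (s_mult f (h::'a::comm_ring_1 series))"
  by (metis s_mult_assoc s_mult_commute)

lemma s_mult_add_right: "s_mult f (g + h) = s_mult f g + s_mult f (h::'a::comm_ring_1 series)"
  by (simp add: fun_eq_iff s_mult_def distrib_left sum.distrib)

lemma s_mult_add_left: "s_mult (f + g) h = s_mult f h + s_mult g (h::'a::comm_ring_1 series)"
  by (simp add: fun_eq_iff s_mult_def distrib_right sum.distrib)

lemma s_mult_diff_right: "s_mult f (g - h) = s_mult f g - s_mult f (h::'a::comm_ring_1 series)"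
  by (simp add: fun_eq_iff s_mult_def right_diff_distrib sum_subtractf)

lemma s_mult_zero_right [simp]: "s_mult f 0 = (0::'a::comm_ring_1 series)"
  by (simp add: fun_eq_iff s_mult_def)

lemma s_mult_zero_left [simp]: "s_mult 0 f = (0::'a::comm_ring_1 series)"
  by (simp add: fun_eq_iff s_mult_def)

lemma s_mult_sum_right: "s_mult f (\<Sum>i\<in>A. g i) = (\<Sum>i\<in>A. s_mult f (g i::'a::comm_ring_1 series))"
  using sum_comp_morphism[of "s_mult f" g A] by (simp add: s_mult_add_right o_def)

definition s_scale :: "'a::comm_ring_1 \<Rightarrow> 'a series \<Rightarrow> 'a series" where
  "s_scale c f = (\<lambda>m. c * f m)"

lemma s_mult_const_left: "s_mult (s_const c) f = s_scale c f"
proof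
  fix m
  have "s_mult (s_const c) f m = (\<Sum>a\<in>{a. a \<subseteq># m}. if a = {#} then c * f (m - a) else 0)"
    unfolding s_mult_def s_const_def by (intro sum.cong) auto
  also have "\<dots> = c * f m"
    by (simp add: finite_submultisets)
  finally show "s_mult (s_const c) f m = s_scale c f m"
    by (simp add: s_scale_def)
qed

lemma s_mult_const_right: "s_mult f (s_const c) = s_scale c f"
  by (metis s_mult_commute s_mult_const_left)

lemma s_scale_scale: "s_scale a (s_scale b f) = s_scale (a * b) f"
  by (simp add: s_scale_def mult.assoc)

lemma s_scale_mult_right: "s_scale c (s_mult f g) = s_mult f (s_scale c g)"
  by (metis s_mult_const_left s_mult_left_commute)

lemma s_scale_add: "s_scale c (f + g) = s_scale c f + s_scale c g"
  by (simp add: s_scale_def fun_eq_iff distrib_left)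

lemma s_scale_diff: "s_scale c (f - g) = s_scale c f - s_scale c g"
  by (simp add: s_scale_def fun_eq_iff right_diff_distrib)

lemma s_scale_one [simp]: "s_scale 1 f = f"
  by (simp add: s_scale_def)

lemma s_scale_zero [simp]: "s_scale 0 f = 0"
  by (simp add: s_scale_def fun_eq_iff)

lemma s_scale_minus_one: "s_scale (- 1) f = - f"
  by (simp add: s_scale_def fun_eq_iff)

lemma s_scale_const_one: "s_scale c (s_const 1) = s_const c"
  by (simp add: s_scale_def s_const_def fun_eq_iff)

definition s_var :: "nat \<Rightarrow> 'a::comm_ring_1 series" where
  "s_var j = (\<lambda>m. if m = {#j#} then 1 else 0)"

lemma s_mult_var: "s_mult (s_var j) h = (\<lambda>m. if j \<in># m then h (m - {#j#}) else 0)"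
proof
  fix m
  have "s_mult (s_var j) h m = (\<Sum>a\<in>{a. a \<subseteq># m}. if a = {#j#} then h (m - a) else 0)"
    unfolding s_mult_def s_var_def by (intro sum.cong) auto
  also have "\<dots> = (if j \<in># m then h (m - {#j#}) else 0)"
    by (simp add: finite_submultisets)
  finally show "s_mult (s_var j) h m = (if j \<in># m then h (m - {#j#}) else 0)" .
qed

definition s_deriv :: "nat \<Rightarrow> 'a::comm_ring_1 series \<Rightarrow> 'a series" where
  "s_deriv i f = (\<lambda>m. of_nat (Suc (count m i)) * f (m + {#i#}))"

lemma s_deriv_add: "s_deriv i (f + g) = s_deriv i f + s_deriv i g"
  by (simp add: s_deriv_def fun_eq_iff distrib_left)

lemma s_deriv_scale: "s_deriv i (s_scale c f) = s_scale c (s_deriv i f)"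
  by (simp add: s_deriv_def s_scale_def fun_eq_iff mult.left_commute)

lemma s_deriv_var: "s_deriv i (s_var j) = s_const (if i = j then 1 else 0)"
proof
  fix m
  have "m + {#i#} = {#j#} \<longleftrightarrow> m = {#} \<and> i = j"
    by (metis add_cancel_right_left add_mset_eq_single add_mset_add_single empty_neutral(1))
  then show "s_deriv i (s_var j) m = s_const (if i = j then 1 else 0) m"
    by (auto simp: s_deriv_def s_var_def s_const_def)
qed

lemma sum_splits_add_mset:
  "(\<Sum>p\<in>splits (m + {#i#}). of_nat (count (fst p) i) * F (fst p) (snd p)) =
   (\<Sum>q\<in>splits m. of_nat (Suc (count (fst q) i)) * F (fst q + {#i#}) (snd q) :: 'a::comm_ring_1)"
proof -
  let ?h = "\<lambda>q. (fst q + {#i#}, snd q)"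
  have "(\<Sum>q\<in>splits m. of_nat (Suc (count (fst q) i)) * F (fst q + {#i#}) (snd q) :: 'a) =
        (\<Sum>p\<in>?h ` splits m. of_nat (count (fst p) i) * F (fst p) (snd p))"
    by (subst sum.reindex) (auto simp: inj_on_def prod_eq_iff)
  also have "\<dots> = (\<Sum>p\<in>splits (m + {#i#}). of_nat (count (fst p) i) * F (fst p) (snd p))"
  proof (rule sum.mono_neutral_left)
    show "?h ` splits m \<subseteq> splits (m + {#i#})"
      by (auto simp: splits_def)
    show "\<forall>p\<in>splits (m + {#i#}) - ?h ` splits m. of_nat (count (fst p) i) * F (fst p) (snd p) = (0::'a)"
    proof
      fix p assume p: "p \<in> splits (m + {#i#}) - ?h ` splits m"
      have "i \<notin># fst p"
      proof
        assume i: "i \<in># fst p"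
        then have "p = ?h (fst p - {#i#}, snd p)" and "(fst p - {#i#}, snd p) \<in> splits m"
          using p by (auto simp: prod_eq_iff splits_def insert_DiffM2)
        then show False
          using p by blast
      qed
      then show "of_nat (count (fst p) i) * F (fst p) (snd p) = (0::'a)"
        by (simp add: not_in_iff)
    qed
  qed (rule finite_splits)
  finally show ?thesis by simp
qed

lemma s_deriv_mult:
  "s_deriv i (s_mult f g) = s_mult (s_deriv i f) g + s_mult f (s_deriv i (g::'a::comm_ring_1 series))"
proof
  fix m
  let ?S = "\<lambda>f g. \<Sum>p\<in>splits (m + {#i#}). of_nat (count (fst p) i) * (f (fst p) * g (snd p))"
  have count_split: "of_nat (Suc (count m i)) = (of_nat (count (fst p) i) + of_nat (count (snd p) i) :: 'a)"
    if "p \<in> splits (m + {#i#})" for p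
  proof -
    have "count (fst p) i + count (snd p) i = Suc (count m i)"
      using that by (simp add: splits_def flip: count_union)
    then show ?thesis
      by (metis of_nat_add)
  qed
  have S_eq: "?S f' g' = s_mult (s_deriv i f') g' m" for f' g'
    unfolding sum_splits_add_mset[where F="\<lambda>a b. f' a * g' b"] s_mult_splits s_deriv_def
    by (simp add: mult.assoc)
  have "s_deriv i (s_mult f g) m = (\<Sum>p\<in>splits (m + {#i#}). of_nat (Suc (count m i)) * (f (fst p) * g (snd p)))"
    unfolding s_deriv_def s_mult_splits by (simp add: sum_distrib_left)
  also have "\<dots> = (\<Sum>p\<in>splits (m + {#i#}). of_nat (count (fst p) i) * (f (fst p) * g (snd p))
      + of_nat (count (snd p) i) * (g (snd p) * f (fst p)))"
    by (rule sum.cong) (simp_all only: count_split distrib_right mult.commute[of "g _"])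
  also have "\<dots> = ?S f g + (\<Sum>p\<in>splits (m + {#i#}). of_nat (count (snd p) i) * (g (snd p) * f (fst p)))"
    by (simp only: sum.distrib)
  also have "(\<Sum>p\<in>splits (m + {#i#}). of_nat (count (snd p) i) * (g (snd p) * f (fst p))) = ?S g f"
    by (rule sum.reindex_bij_witness[where i="\<lambda>p. (snd p, fst p)" and j="\<lambda>p. (snd p, fst p)"])
       (auto simp: splits_def add.commute)
  finally have "s_deriv i (s_mult f g) m = s_mult (s_deriv i f) g m + s_mult (s_deriv i g) f m"
    by (simp only: S_eq)
  then show "s_deriv i (s_mult f g) m = (s_mult (s_deriv i f) g + s_mult f (s_deriv i g)) m"
    by (simp add: s_mult_commute[of f "s_deriv i g"])
qed

lemma s_deriv_mult_var:
  "s_deriv i (s_mult (s_var j) f) = (if i = j then f else 0) + s_mult (s_var j) (s_deriv i f)"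
  by (simp add: s_deriv_mult s_deriv_var s_mult_const_left s_scale_def fun_eq_iff)

text \<open>The monomials of \<open>f\<close> whose least variable is \<open>j\<close>, divided by \<open>x\<^sub>j\<close>.\<close>
definition s_var_quot :: "nat \<Rightarrow> 'a::comm_ring_1 series \<Rightarrow> 'a series" where
  "s_var_quot j f = (\<lambda>m. if \<forall>k\<in>#m. j \<le> k then f (m + {#j#}) else 0)"

lemma vars_le_diff_iff_Min:
  assumes "j \<in># m"
  shows "(\<forall>k\<in>#m - {#j#}. j \<le> k) \<longleftrightarrow> j = Min (set_mset m)"
proof
  assume le: "\<forall>k\<in>#m - {#j#}. j \<le> k"
  have "\<forall>k\<in>#m. j \<le> k"
  proof
    fix k assume "k \<in># m"
    then show "j \<le> k"
      using le by (cases "k = j") (auto simp: in_diff_count)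
  qed
  then show "j = Min (set_mset m)"
    using assms by (intro Min_eqI[symmetric]) auto
next
  assume "j = Min (set_mset m)"
  then show "\<forall>k\<in>#m - {#j#}. j \<le> k"
    by (auto dest!: in_diffD)
qed

locale series_ring =
  fixes R :: "'a::comm_ring_1 series set" and n :: nat
  assumes R_cases: "R = R_ps n \<or> R = R_poly n"
begin

lemma R_iff:
  "f \<in> R \<longleftrightarrow> (\<forall>m. f m \<noteq> 0 \<longrightarrow> set_mset m \<subseteq> {..<n}) \<and> (R = R_poly n \<longrightarrow> finite {m. f m \<noteq> 0})"
  using R_cases unfolding R_poly_def R_ps_def by auto

lemma R_memI:
  "(\<And>m. f m \<noteq> 0 \<Longrightarrow> set_mset m \<subseteq> {..<n}) \<Longrightarrow> (R = R_poly n \<Longrightarrow> finite {m. f m \<noteq> 0}) \<Longrightarrow> f \<in> R"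
  using R_iff by blast

lemma R_vars: "f \<in> R \<Longrightarrow> f m \<noteq> 0 \<Longrightarrow> set_mset m \<subseteq> {..<n}"
  using R_iff by blast

lemma R_poly_finite_support: "f \<in> R \<Longrightarrow> R = R_poly n \<Longrightarrow> finite {m. f m \<noteq> 0}"
  using R_iff by blast

lemma R_memI_shift:
  assumes "f \<in> R" and "\<And>m. g m \<noteq> 0 \<Longrightarrow> f (m + {#j#}) \<noteq> 0"
  shows "g \<in> R"
proof (rule R_memI)
  show "set_mset m \<subseteq> {..<n}" if "g m \<noteq> 0" for m
    using R_vars[OF assms(1) assms(2)[OF that]] by simp
  assume "R = R_poly n"
  then have "finite ((\<lambda>m. m + {#j#}) -` {m. f m \<noteq> 0})"
    using R_poly_finite_support[OF assms(1)] by (intro finite_vimageI) (auto simp: inj_def)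
  then show "finite {m. g m \<noteq> 0}"
    by (rule finite_subset[rotated]) (auto dest: assms(2))
qed

lemma mult_closed: "f \<in> R \<Longrightarrow> g \<in> R \<Longrightarrow> s_mult f g \<in> R"
proof (rule R_memI)
  fix m assume "f \<in> R" "g \<in> R" "s_mult f g m \<noteq> 0"
  then show "set_mset m \<subseteq> {..<n}"
    by (elim s_mult_nonzero_split) (use R_vars in fastforce)
next
  assume "f \<in> R" "g \<in> R" "R = R_poly n"
  then have "finite ((\<lambda>p. fst p + snd p) ` ({m. f m \<noteq> 0} \<times> {m. g m \<noteq> 0}))"
    using R_poly_finite_support by blast
  moreover have "{m. s_mult f g m \<noteq> 0} \<subseteq> (\<lambda>p. fst p + snd p) ` ({m. f m \<noteq> 0} \<times> {m. g m \<noteq> 0})"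
  proof
    fix m assume "m \<in> {m. s_mult f g m \<noteq> 0}"
    then obtain a b where "a + b = m" "f a \<noteq> 0" "g b \<noteq> 0"
      by (auto elim: s_mult_nonzero_split)
    then show "m \<in> (\<lambda>p. fst p + snd p) ` ({m. f m \<noteq> 0} \<times> {m. g m \<noteq> 0})"
      by (intro image_eqI[of _ _ "(a, b)"]) auto
  qed
  ultimately show "finite {m. s_mult f g m \<noteq> 0}"
    by (rule finite_subset[rotated])
qed

lemma add_closed: "f \<in> R \<Longrightarrow> g \<in> R \<Longrightarrow> f + g \<in> R"
proof (rule R_memI)
  fix m assume "f \<in> R" "g \<in> R" "(f + g) m \<noteq> 0"
  then show "set_mset m \<subseteq> {..<n}"
    using R_vars by (metis add.right_neutral plus_fun_apply)
next
  assume "f \<in> R" "g \<in> R" "R = R_poly n"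
  then have "finite ({m. f m \<noteq> 0} \<union> {m. g m \<noteq> 0})"
    using R_poly_finite_support by blast
  then show "finite {m. (f + g) m \<noteq> 0}"
    by (rule finite_subset[rotated]) auto
qed

lemma zero_closed: "(0::'a series) \<in> R"
  by (rule R_memI) auto

lemma const_closed: "s_const c \<in> R"
proof (rule R_memI)
  show "finite {m. s_const c m \<noteq> 0}"
    by (rule finite_subset[of _ "{{#}}"]) (auto simp: s_const_def)
qed (auto simp: s_const_def split: if_splits)

lemma var_closed: "j < n \<Longrightarrow> s_var j \<in> R"
proof (rule R_memI)
  show "finite {m. s_var j m \<noteq> 0}"
    by (rule finite_subset[of _ "{{#j#}}"]) (auto simp: s_var_def)
qed (auto simp: s_var_def split: if_splits)

lemma scale_closed: "f \<in> R \<Longrightarrow> s_scale c f \<in> R"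
  using mult_closed[OF const_closed] by (simp add: s_mult_const_left)

lemma uminus_closed: "f \<in> R \<Longrightarrow> - f \<in> R"
  using scale_closed[of f "- 1"] by (simp add: s_scale_minus_one)

lemma diff_closed: "f \<in> R \<Longrightarrow> g \<in> R \<Longrightarrow> f - g \<in> R"
  using add_closed uminus_closed by (metis diff_conv_add_uminus)

lemma sum_closed: "(\<And>i. i \<in> A \<Longrightarrow> g i \<in> R) \<Longrightarrow> (\<Sum>i\<in>A. g i) \<in> R"
  by (induction A rule: infinite_finite_induct) (simp_all add: add_closed zero_closed)

lemma deriv_closed: "f \<in> R \<Longrightarrow> s_deriv i f \<in> R"
  by (erule R_memI_shift[where j = i]) (auto simp: s_deriv_def)

lemma var_quot_closed: "f \<in> R \<Longrightarrow> s_var_quot j f \<in> R"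
  by (erule R_memI_shift[where j = j]) (auto simp: s_var_quot_def split: if_splits)

lemma decompose_by_least_var:
  assumes f: "f \<in> R"
  shows "f = s_const (f {#}) + (\<Sum>j<n. s_mult (s_var j) (s_var_quot j f))"
proof
  fix m
  show "f m = (s_const (f {#}) + (\<Sum>j<n. s_mult (s_var j) (s_var_quot j f))) m"
  proof (cases "m = {#}")
    case True
    then show ?thesis
      by (simp add: s_const_def s_mult_var sum_fun_apply)
  next
    case False
    have "(\<Sum>j<n. s_mult (s_var j) (s_var_quot j f)) m = (\<Sum>j<n. if j = Min (set_mset m) then f m else 0)"
      unfolding sum_fun_apply s_mult_var s_var_quot_def
    proof (rule sum.cong)
      fix j
      show "(if j \<in># m then if \<forall>k\<in>#m - {#j#}. j \<le> k then f (m - {#j#} + {#j#}) else 0 else 0) =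
            (if j = Min (set_mset m) then f m else 0)"
        using vars_le_diff_iff_Min[of j m] False by (auto simp: Min_in)
    qed simp
    also have "\<dots> = f m"
    proof (cases "f m = 0")
      case False
      have "Min (set_mset m) \<in> set_mset m"
        using \<open>m \<noteq> {#}\<close> by simp
      then have "Min (set_mset m) \<in> {..<n}"
        using R_vars[OF f False] by blast
      then show ?thesis
        by (simp add: sum.delta)
    qed simp
    finally show ?thesis
      using False by (simp add: s_const_def)
  qed
qed

end

section \<open>Differential operators\<close>

definition commutator ::
  "('a::comm_ring_1 series \<Rightarrow> 'a series) \<Rightarrow> 'a series \<Rightarrow> 'a series \<Rightarrow> 'a series" where
  "commutator d r = (\<lambda>f. d (s_mult r f) - s_mult r (d f))"

lemma commutator_eq: "commutator d r f = d (s_mult r f) - s_mult r (d f)"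
  by (simp add: commutator_def)

lemma diffop_0_iff: "diffop R 0 d \<longleftrightarrow> (\<exists>a\<in>R. \<forall>f\<in>R. d f = s_mult a f)"
  by simp

lemma diffop_Suc_iff:
  "diffop R (Suc k) d \<longleftrightarrow> V_linear R d \<and> (\<forall>r\<in>R. diffop R k (commutator d r))"
proof -
  have "(\<lambda>f. s_add (d (s_mult r f)) (\<lambda>m. - s_mult r (d f) m)) = commutator d r" for r
    by (simp add: commutator_def s_add_def fun_eq_iff)
  then show ?thesis
    by simp
qed

declare diffop.simps [simp del]

lemma diffop_SucI:
  "V_linear R d \<Longrightarrow> (\<And>r. r \<in> R \<Longrightarrow> diffop R k (commutator d r)) \<Longrightarrow> diffop R (Suc k) d"
  by (simp add: diffop_Suc_iff)

lemma diffop_SucD: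
  assumes "diffop R (Suc k) d"
  shows "V_linear R d" and "r \<in> R \<Longrightarrow> diffop R k (commutator d r)"
  using assms by (simp_all add: diffop_Suc_iff)

lemma diffop_0E:
  assumes "diffop R 0 d"
  obtains a where "a \<in> R" "\<And>f. f \<in> R \<Longrightarrow> d f = s_mult a f"
  using assms by (auto simp: diffop_0_iff)

lemma commutator_swap:
  "commutator (commutator d a) b f = commutator (commutator d b) a (f::'a::comm_ring_1 series)"
  unfolding commutator_eq
  by (simp add: s_mult_diff_right algebra_simps) (metis s_mult_left_commute)

context series_ring
begin

lemma V_linearD:
  assumes "V_linear R d"
  shows "f \<in> R \<Longrightarrow> d f \<in> R"
    and "f \<in> R \<Longrightarrow> g \<in> R \<Longrightarrow> d (f + g) = d f + d g"
    and "f \<in> R \<Longrightarrow> d (s_scale c f) = s_scale c (d f)"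
  using assms unfolding V_linear_def by (auto simp: s_add_eq_plus s_mult_const_left)

lemma V_linearI:
  assumes "\<And>f. f \<in> R \<Longrightarrow> d f \<in> R"
    and "\<And>f g. f \<in> R \<Longrightarrow> g \<in> R \<Longrightarrow> d (f + g) = d f + d g"
    and "\<And>f c. f \<in> R \<Longrightarrow> d (s_scale c f) = s_scale c (d f)"
  shows "V_linear R d"
  using assms unfolding V_linear_def by (auto simp: s_add_eq_plus s_mult_const_left)

lemma V_linear_zero: "V_linear R d \<Longrightarrow> d 0 = 0"
  using V_linearD(3)[of d 0 0] zero_closed by simp

lemma V_linear_sum:
  assumes d: "V_linear R d"
  shows "(\<And>i. i \<in> A \<Longrightarrow> g i \<in> R) \<Longrightarrow> d (\<Sum>i\<in>A. g i) = (\<Sum>i\<in>A. d (g i))"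
  by (induction A rule: infinite_finite_induct)
     (simp_all add: V_linear_zero[OF d] V_linearD(2)[OF d] sum_closed)

lemma V_linear_cong:
  assumes d: "V_linear R d" and eq: "\<And>f. f \<in> R \<Longrightarrow> d f = e f"
  shows "V_linear R e"
  by (rule V_linearI) (auto simp: V_linearD[OF d] add_closed scale_closed eq[symmetric])

lemma commutator_add:
  assumes d: "V_linear R d" and "r \<in> R" "u \<in> R" "v \<in> R"
  shows "commutator d r (u + v) = commutator d r u + commutator d r v"
  using assms by (simp add: commutator_eq s_mult_add_right V_linearD[OF d] mult_closed)

lemma commutator_zero: "V_linear R d \<Longrightarrow> commutator d r 0 = 0"
  by (simp add: commutator_eq V_linear_zero[of d])

lemma commutator_comp:
  assumes "V_linear R d" "V_linear R e" "r \<in> R" "f \<in> R"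
  shows "commutator (\<lambda>f. d (e f)) r f = d (commutator e r f) + commutator d r (e f)"
proof -
  have "commutator e r f \<in> R" "s_mult r (e f) \<in> R"
    using assms by (simp_all add: commutator_eq diff_closed mult_closed V_linearD(1))
  moreover have "e (s_mult r f) = commutator e r f + s_mult r (e f)"
    by (simp add: commutator_eq)
  ultimately have "d (e (s_mult r f)) = d (commutator e r f) + d (s_mult r (e f))"
    by (simp only: V_linearD(2)[OF assms(1)])
  then show ?thesis
    by (simp add: commutator_eq)
qed

lemma diffop_cong: "diffop R k d \<Longrightarrow> (\<And>f. f \<in> R \<Longrightarrow> d f = e f) \<Longrightarrow> diffop R k e"
proof (induction k arbitrary: d e)
  case 0
  then show ?case
    by (auto simp: diffop_0_iff)
next
  case (Suc k)
  have "diffop R k (commutator e r)" if r: "r \<in> R" for r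
  proof (rule Suc.IH)
    show "diffop R k (commutator d r)"
      using Suc.prems(1) r by (simp add: diffop_Suc_iff)
  qed (simp add: commutator_eq Suc.prems(2) mult_closed r)
  moreover have "V_linear R e"
    using Suc.prems V_linear_cong by (auto simp: diffop_Suc_iff)
  ultimately show ?case
    by (simp add: diffop_SucI)
qed

lemma diffop_V_linear: "diffop R k d \<Longrightarrow> V_linear R d"
proof (cases k)
  case 0
  assume "diffop R k d"
  then obtain a where a: "a \<in> R" and d: "\<And>f. f \<in> R \<Longrightarrow> d f = s_mult a f"
    using 0 by (auto elim: diffop_0E)
  show "V_linear R d"
    by (rule V_linearI) (simp_all add: a d mult_closed add_closed scale_closed s_mult_add_right s_scale_mult_right)
qed (simp add: diffop_Suc_iff)

lemma diffop_closed: "diffop R k d \<Longrightarrow> f \<in> R \<Longrightarrow> d f \<in> R"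
  using diffop_V_linear V_linearD(1) by blast

lemma commutator_mult_op:
  "r \<in> R \<Longrightarrow> (\<And>f. f \<in> R \<Longrightarrow> d f = s_mult a f) \<Longrightarrow> f \<in> R \<Longrightarrow> commutator d r f = 0"
  unfolding commutator_eq by (simp add: mult_closed s_mult_left_commute)

lemma diffop_0_zero: "(\<And>f. f \<in> R \<Longrightarrow> d f = 0) \<Longrightarrow> diffop R 0 d"
  using zero_closed by (auto simp: diffop_0_iff intro!: bexI[of _ 0])

lemma diffop_Suc_mono: "diffop R k d \<Longrightarrow> diffop R (Suc k) d"
proof (induction k arbitrary: d)
  case 0
  then obtain a where "\<And>f. f \<in> R \<Longrightarrow> d f = s_mult a f"
    by (auto elim: diffop_0E)
  then have "diffop R 0 (commutator d r)" if "r \<in> R" for r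
    using that by (intro diffop_0_zero commutator_mult_op)
  then show ?case
    using diffop_V_linear[OF 0] by (simp add: diffop_Suc_iff)
next
  case (Suc k)
  show ?case
  proof (rule diffop_SucI)
    show "V_linear R d"
      using Suc.prems by (rule diffop_SucD)
    show "diffop R (Suc k) (commutator d r)" if "r \<in> R" for r
      using Suc.IH diffop_SucD(2)[OF Suc.prems that] .
  qed
qed

lemma diffop_mono: "k \<le> l \<Longrightarrow> diffop R k d \<Longrightarrow> diffop R l d"
  by (induction l rule: dec_induct) (auto intro: diffop_Suc_mono)

lemma diffop_zero: "(\<And>f. f \<in> R \<Longrightarrow> d f = 0) \<Longrightarrow> diffop R k d"
  by (rule diffop_mono[OF _ diffop_0_zero]) simp_all

lemma diffop_add: "diffop R k d \<Longrightarrow> diffop R k e \<Longrightarrow> diffop R k (\<lambda>f. d f + e f)"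
proof (induction k arbitrary: d e)
  case 0
  then obtain a b where "a \<in> R" "\<And>f. f \<in> R \<Longrightarrow> d f = s_mult a f"
    and "b \<in> R" "\<And>f. f \<in> R \<Longrightarrow> e f = s_mult b f"
    by (auto elim!: diffop_0E)
  then show ?case
    unfolding diffop_0_iff by (intro bexI[of _ "a + b"]) (simp_all add: s_mult_add_left add_closed)
next
  case (Suc k)
  have d: "V_linear R d" and e: "V_linear R e"
    using Suc.prems by (simp_all add: diffop_Suc_iff)
  have "V_linear R (\<lambda>f. d f + e f)"
    by (rule V_linearI) (simp_all add: V_linearD[OF d] V_linearD[OF e] add_closed s_scale_add)
  moreover have "diffop R k (commutator (\<lambda>f. d f + e f) r)" if r: "r \<in> R" for r
  proof -
    have "diffop R k (\<lambda>f. commutator d r f + commutator e r f)"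
      using Suc r by (intro Suc.IH) (simp_all add: diffop_Suc_iff)
    then show ?thesis
      by (rule diffop_cong) (simp add: commutator_eq s_mult_add_right)
  qed
  ultimately show ?case
    by (rule diffop_SucI)
qed

lemma diffop_sum: "(\<And>i. i \<in> A \<Longrightarrow> diffop R k (d i)) \<Longrightarrow> diffop R k (\<lambda>f. \<Sum>i\<in>A. d i f)"
proof (induction A rule: infinite_finite_induct)
  case (insert x F)
  then have "diffop R k (\<lambda>f. d x f + (\<Sum>i\<in>F. d i f))"
    by (intro diffop_add) simp_all
  then show ?case
    by (rule diffop_cong) (simp add: insert.hyps fun_eq_iff)
qed (simp_all add: diffop_zero)

lemma diffop_mult_left: "a \<in> R \<Longrightarrow> diffop R k d \<Longrightarrow> diffop R k (\<lambda>f. s_mult a (d f))"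
proof (induction k arbitrary: d)
  case 0
  then obtain b where "b \<in> R" "\<And>f. f \<in> R \<Longrightarrow> d f = s_mult b f"
    by (auto elim: diffop_0E)
  with 0 show ?case
    unfolding diffop_0_iff by (intro bexI[of _ "s_mult a b"]) (simp_all add: s_mult_assoc mult_closed)
next
  case (Suc k)
  have d: "V_linear R d"
    using Suc.prems by (simp add: diffop_Suc_iff)
  have "V_linear R (\<lambda>f. s_mult a (d f))"
    by (rule V_linearI) (simp_all add: V_linearD[OF d] Suc.prems mult_closed s_mult_add_right s_scale_mult_right)
  moreover have "diffop R k (commutator (\<lambda>f. s_mult a (d f)) r)" if r: "r \<in> R" for r
  proof -
    have "diffop R k (\<lambda>f. s_mult a (commutator d r f))"
      using Suc r by (intro Suc.IH) (simp_all add: diffop_Suc_iff)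
    then show ?thesis
      by (rule diffop_cong) (simp add: commutator_eq s_mult_diff_right s_mult_left_commute)
  qed
  ultimately show ?case
    by (rule diffop_SucI)
qed

lemma diffop_mult_right: "a \<in> R \<Longrightarrow> diffop R k d \<Longrightarrow> diffop R k (\<lambda>f. d (s_mult a f))"
proof (induction k arbitrary: d)
  case 0
  then obtain b where "b \<in> R" "\<And>f. f \<in> R \<Longrightarrow> d f = s_mult b f"
    by (auto elim: diffop_0E)
  with 0 show ?case
    unfolding diffop_0_iff by (intro bexI[of _ "s_mult b a"]) (simp_all add: s_mult_assoc mult_closed)
next
  case (Suc k)
  have d: "V_linear R d"
    using Suc.prems by (simp add: diffop_Suc_iff)
  have "V_linear R (\<lambda>f. d (s_mult a f))"
    by (rule V_linearI)
       (simp_all add: V_linearD[OF d] Suc.prems mult_closed s_mult_add_right flip: s_scale_mult_right)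
  moreover have "diffop R k (commutator (\<lambda>f. d (s_mult a f)) r)" if r: "r \<in> R" for r
  proof -
    have "diffop R k (\<lambda>f. commutator d r (s_mult a f))"
      using Suc r by (intro Suc.IH) (simp_all add: diffop_Suc_iff)
    then show ?thesis
      by (rule diffop_cong) (simp add: commutator_eq s_mult_left_commute)
  qed
  ultimately show ?case
    by (rule diffop_SucI)
qed

lemma diffop_scale: "diffop R k d \<Longrightarrow> diffop R k (\<lambda>f. s_scale c (d f))"
  using diffop_mult_left[OF const_closed, of k d c] by (simp add: s_mult_const_left)

lemma diffop_diff: "diffop R k d \<Longrightarrow> diffop R k e \<Longrightarrow> diffop R k (\<lambda>f. d f - e f)"
  using diffop_add[of k d "\<lambda>f. s_scale (- 1) (e f)"] diffop_scale[of k e "- 1"]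
  by (simp add: s_scale_minus_one)

lemma diffop_comp_0_left: "diffop R 0 d \<Longrightarrow> diffop R l e \<Longrightarrow> diffop R l (\<lambda>f. d (e f))"
  by (erule diffop_0E, erule diffop_cong[OF diffop_mult_left]) (simp_all add: diffop_closed)

lemma diffop_comp_0_right: "diffop R k d \<Longrightarrow> diffop R 0 e \<Longrightarrow> diffop R k (\<lambda>f. d (e f))"
  by (erule diffop_0E, erule diffop_cong[OF diffop_mult_right]) simp_all

lemma diffop_comp: "diffop R k d \<Longrightarrow> diffop R l e \<Longrightarrow> diffop R (k + l) (\<lambda>f. d (e f))"
proof (induction "k + l" arbitrary: k l d e rule: less_induct)
  case less
  consider "k = 0" | "l = 0" | k' l' where "k = Suc k'" "l = Suc l'"
    by (meson not0_implies_Suc)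
  then show ?case
  proof cases
    case 1
    then show ?thesis
      using diffop_comp_0_left less.prems by simp
  next
    case 2
    then show ?thesis
      using diffop_comp_0_right less.prems by simp
  next
    case 3
    have d: "V_linear R d" "\<And>r. r \<in> R \<Longrightarrow> diffop R k' (commutator d r)"
      using less.prems(1) 3 by (auto simp: diffop_Suc_iff)
    have e: "V_linear R e" "\<And>r. r \<in> R \<Longrightarrow> diffop R l' (commutator e r)"
      using less.prems(2) 3 by (auto simp: diffop_Suc_iff)
    have "V_linear R (\<lambda>f. d (e f))"
      by (rule V_linearI) (simp_all add: V_linearD[OF d(1)] V_linearD[OF e(1)])
    moreover have "diffop R (k' + l) (commutator (\<lambda>f. d (e f)) r)" if r: "r \<in> R" for r
    proof -
      have "diffop R (k + l') (\<lambda>f. d (commutator e r f))"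
        using less.hyps[of k l' d "commutator e r"] less.prems(1) e(2)[OF r] 3 by simp
      moreover have "diffop R (k' + l) (\<lambda>f. commutator d r (e f))"
        using less.hyps[of k' l "commutator d r" e] less.prems(2) d(2)[OF r] 3 by simp
      ultimately have "diffop R (k' + l) (\<lambda>f. d (commutator e r f) + commutator d r (e f))"
        using 3 by (intro diffop_add) simp_all
      then show ?thesis
        by (rule diffop_cong) (simp add: commutator_comp d(1) e(1) r)
    qed
    ultimately show ?thesis
      using 3 by (simp add: diffop_SucI)
  qed
qed

lemma diffop_deriv: "diffop R 1 (s_deriv i)"
  unfolding One_nat_def diffop_Suc_iff
proof (intro conjI ballI)
  show "V_linear R (s_deriv i)"
    by (rule V_linearI) (simp_all add: deriv_closed s_deriv_add s_deriv_scale)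
  show "diffop R 0 (commutator (s_deriv i) r)" if "r \<in> R" for r
    unfolding diffop_0_iff using that
    by (intro bexI[of _ "s_deriv i r"]) (simp_all add: commutator_eq s_deriv_mult deriv_closed)
qed

lemma diffop_restrict_in_Dring: "diffop R k d \<Longrightarrow> restrict d R \<in> Dring R"
  unfolding Dring_def by (auto intro!: exI[of _ k] elim: diffop_cong)

lemma Dring_diffop: "d \<in> Dring R \<Longrightarrow> \<exists>k. diffop R k d"
  unfolding Dring_def by auto

lemma mult_op_in_Dring: "r \<in> R \<Longrightarrow> mult_op R r \<in> Dring R"
  unfolding mult_op_def by (rule diffop_restrict_in_Dring[of 0]) (auto simp: diffop_0_iff)

lemma D_mult_in_Dring: "d \<in> Dring R \<Longrightarrow> e \<in> Dring R \<Longrightarrow> D_mult R d e \<in> Dring R"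
proof -
  assume "d \<in> Dring R" "e \<in> Dring R"
  then obtain k l where "diffop R k d" "diffop R l e"
    using Dring_diffop by blast
  then have "diffop R (k + l) (\<lambda>f. d (e f))"
    by (rule diffop_comp)
  then show ?thesis
    unfolding D_mult_def compose_def by (rule diffop_restrict_in_Dring)
qed

lemma deriv_in_Dring: "restrict (s_deriv i) R \<in> Dring R"
  by (rule diffop_restrict_in_Dring[OF diffop_deriv])

end

section \<open>Lowering the order\<close>

fun diffop_less :: "'a::comm_ring_1 series set \<Rightarrow> nat \<Rightarrow> ('a series \<Rightarrow> 'a series) \<Rightarrow> bool" where
  "diffop_less R 0 d \<longleftrightarrow> (\<forall>f\<in>R. d f = 0)"
| "diffop_less R (Suc k) d \<longleftrightarrow> diffop R k d"

text \<open>For \<open>d = \<partial>\<^sup>\<alpha>\<close> with \<open>|\<alpha>| = k\<close> one has \<open>\<Sum>\<^sub>i [d, x\<^sub>i] \<partial>\<^sub>i = k d\<close>, so this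
  operator cancels the top-order part of \<open>d\<close>.\<close>
definition euler_reduct ::
  "nat \<Rightarrow> nat \<Rightarrow> ('a::comm_ring_1 series \<Rightarrow> 'a series) \<Rightarrow> 'a series \<Rightarrow> 'a series" where
  "euler_reduct n k d = (\<lambda>f. s_scale (of_nat k) (d f) - (\<Sum>i<n. commutator d (s_var i) (s_deriv i f)))"

definition vanishes_below :: "nat \<Rightarrow> 'a::comm_ring_1 series \<Rightarrow> bool" where
  "vanishes_below N f \<longleftrightarrow> (\<forall>m. size m < N \<longrightarrow> f m = 0)"

lemma vanishes_below_mult_var: "vanishes_below N h \<Longrightarrow> vanishes_below (Suc N) (s_mult (s_var j) h)"
  unfolding vanishes_below_def s_mult_var
proof (intro allI impI)
  fix m :: "nat multiset"
  assume h: "\<forall>m. size m < N \<longrightarrow> h m = 0" and "size m < Suc N"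
  then have "size (m - {#j#}) < N" if "j \<in># m"
    using that \<open>size m < Suc N\<close> by (auto dest!: multi_member_split)
  then show "(if j \<in># m then h (m - {#j#}) else 0) = 0"
    using h by simp
qed

lemma vanishes_below_sum:
  "(\<And>i. i \<in> A \<Longrightarrow> vanishes_below N (g i)) \<Longrightarrow> vanishes_below N (\<Sum>i\<in>A. g i)"
  unfolding vanishes_below_def by (simp add: sum_fun_apply)

lemma vanishes_below_all_imp_zero: "(\<And>N. vanishes_below N f) \<Longrightarrow> f = 0"
  unfolding vanishes_below_def by (metis lessI zero_fun_apply ext)

context series_ring
begin

lemma diffop_less_cong: "diffop_less R k d \<Longrightarrow> (\<And>f. f \<in> R \<Longrightarrow> d f = e f) \<Longrightarrow> diffop_less R k e"
  by (cases k) (auto intro: diffop_cong)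

text \<open>On power series \<open>P\<close> is not determined by its values on polynomials, so \<open>P f\<close> and
  \<open>a \<cdot> f\<close> are compared degree by degree, splitting \<open>f\<close> by its least variable.\<close>
lemma vanishes_below_if_commutes_with_vars:
  assumes P: "V_linear R P"
    and P_var: "\<And>j g. j < n \<Longrightarrow> g \<in> R \<Longrightarrow> P (s_mult (s_var j) g) = s_mult (s_var j) (P g)"
    and P_const: "\<And>c. P (s_const c) = s_mult a (s_const c)"
  shows "f \<in> R \<Longrightarrow> vanishes_below N (P f - s_mult a f)"
proof (induction N arbitrary: f)
  case 0
  then show ?case
    by (simp add: vanishes_below_def)
next
  case (Suc N)
  let ?g = "\<lambda>j. s_var_quot j f"
  have g: "?g j \<in> R" for j
    using var_quot_closed Suc.prems by blast
  have xg: "s_mult (s_var j) (?g j) \<in> R" if "j < n" for j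
    using mult_closed var_closed g that by blast
  have f: "f = s_const (f {#}) + (\<Sum>j<n. s_mult (s_var j) (?g j))"
    using decompose_by_least_var Suc.prems by blast
  have "P f = P (s_const (f {#}) + (\<Sum>j<n. s_mult (s_var j) (?g j)))"
    using f by (rule arg_cong)
  also have "\<dots> = P (s_const (f {#})) + P (\<Sum>j<n. s_mult (s_var j) (?g j))"
    by (rule V_linearD(2)[OF P const_closed sum_closed]) (simp add: xg)
  also have "P (\<Sum>j<n. s_mult (s_var j) (?g j)) = (\<Sum>j<n. P (s_mult (s_var j) (?g j)))"
    by (rule V_linear_sum[OF P]) (simp add: xg)
  also have "\<dots> = (\<Sum>j<n. s_mult (s_var j) (P (?g j)))"
    by (rule sum.cong) (simp_all add: P_var g)
  also note P_const
  finally have "P f = s_mult a (s_const (f {#})) + (\<Sum>j<n. s_mult (s_var j) (P (?g j)))" .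
  moreover have "s_mult a f = s_mult a (s_const (f {#}) + (\<Sum>j<n. s_mult (s_var j) (?g j)))"
    using f by (rule arg_cong)
  then have "s_mult a f = s_mult a (s_const (f {#})) + (\<Sum>j<n. s_mult (s_var j) (s_mult a (?g j)))"
    by (simp add: s_mult_add_right s_mult_sum_right s_mult_left_commute)
  ultimately have "P f - s_mult a f = (\<Sum>j<n. s_mult (s_var j) (P (?g j) - s_mult a (?g j)))"
    by (simp add: sum_subtractf s_mult_diff_right)
  then show ?case
    by (simp add: vanishes_below_sum vanishes_below_mult_var Suc.IH g)
qed

lemma diffop_0_if_commutes_with_vars:
  assumes P: "V_linear R P"
    and comm: "\<And>j f. j < n \<Longrightarrow> f \<in> R \<Longrightarrow> commutator P (s_var j) f = 0"
  shows "diffop R 0 P"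
proof -
  define a where "a = P (s_const 1)"
  have "P (s_const c) = s_mult a (s_const c)" for c
    using V_linearD(3)[OF P const_closed[of 1], of c]
    by (simp add: a_def s_scale_const_one s_mult_const_right)
  moreover have "P (s_mult (s_var j) g) = s_mult (s_var j) (P g)" if "j < n" "g \<in> R" for j g
    using comm[OF that] by (simp add: commutator_eq)
  ultimately have "vanishes_below N (P f - s_mult a f)" if "f \<in> R" for N f
    using vanishes_below_if_commutes_with_vars[OF P] that by blast
  then have "P f = s_mult a f" if "f \<in> R" for f
    using vanishes_below_all_imp_zero[of "P f - s_mult a f"] that by simp
  moreover have "a \<in> R"
    unfolding a_def using V_linearD(1)[OF P const_closed] .
  ultimately show ?thesis
    unfolding diffop_0_iff by blast
qed

lemma diffop_lower_order:
  "diffop R (Suc k) P \<Longrightarrow> (\<And>j. j < n \<Longrightarrow> diffop_less R k (commutator P (s_var j))) \<Longrightarrow> diffop R k P"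
proof (induction k arbitrary: P)
  case 0
  then show ?case
    by (intro diffop_0_if_commutes_with_vars diffop_SucD(1)) simp_all
next
  case (Suc k)
  show ?case
  proof (rule diffop_SucI)
    show "V_linear R P"
      using Suc.prems(1) by (rule diffop_SucD)
    fix r assume r: "r \<in> R"
    show "diffop R k (commutator P r)"
    proof (rule Suc.IH)
      show "diffop R (Suc k) (commutator P r)"
        using diffop_SucD(2)[OF Suc.prems(1) r] .
      fix j assume j: "j < n"
      have Pj: "diffop R k (commutator P (s_var j))"
        using Suc.prems(2)[OF j] by simp
      have "diffop_less R k (commutator (commutator P (s_var j)) r)"
      proof (cases k)
        case 0
        then obtain b where "\<And>f. f \<in> R \<Longrightarrow> commutator P (s_var j) f = s_mult b f"
          using Pj by (auto elim: diffop_0E)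
        then show ?thesis
          using 0 commutator_mult_op[OF r] by simp
      next
        case (Suc k')
        then show ?thesis
          using diffop_SucD(2)[OF _ r] Pj by simp
      qed
      then show "diffop_less R k (commutator (commutator P r) (s_var j))"
        by (rule diffop_less_cong) (simp add: commutator_swap)
    qed
  qed
qed

lemma sum_commutator_deriv_mult_var:
  assumes d: "V_linear R d" and j: "j < n" and f: "f \<in> R"
  shows "(\<Sum>i<n. commutator d (s_var i) (s_deriv i (s_mult (s_var j) f))) =
    commutator d (s_var j) f + ((\<Sum>i<n. s_mult (s_var j) (commutator d (s_var i) (s_deriv i f)))
      + (\<Sum>i<n. commutator (commutator d (s_var j)) (s_var i) (s_deriv i f)))"
proof -
  let ?X = "s_var j :: 'a series"
  let ?c = "\<lambda>i. commutator d (s_var i)"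
  have c_deriv: "?c i (s_deriv i (s_mult ?X f))
      = (if i = j then ?c j f else 0) + ?c i (s_mult ?X (s_deriv i f))" if i: "i < n" for i
    using commutator_add[OF d var_closed[OF i], of "if i = j then f else 0" "s_mult ?X (s_deriv i f)"]
    by (simp add: s_deriv_mult_var f zero_closed deriv_closed mult_closed var_closed j
        commutator_zero[OF d])
  have c_var: "?c i (s_mult ?X g) = s_mult ?X (?c i g) + commutator (?c j) (s_var i) g" for i g
    using commutator_swap[of d ?X "s_var i" g] by (simp add: commutator_eq algebra_simps)
  have "(\<Sum>i<n. ?c i (s_deriv i (s_mult ?X f))) = (\<Sum>i<n. (if i = j then ?c j f else 0)
      + (s_mult ?X (?c i (s_deriv i f)) + commutator (?c j) (s_var i) (s_deriv i f)))"
    by (intro sum.cong refl) (simp add: c_deriv c_var)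
  also have "\<dots> = (\<Sum>i<n. (if i = j then ?c j f else 0))
      + ((\<Sum>i<n. s_mult ?X (?c i (s_deriv i f))) + (\<Sum>i<n. commutator (?c j) (s_var i) (s_deriv i f)))"
    by (simp only: sum.distrib)
  finally show ?thesis
    using j by simp
qed

lemma euler_reduct_commutator_var:
  assumes d: "V_linear R d" and j: "j < n" and f: "f \<in> R"
  shows "commutator (euler_reduct n (Suc k) d) (s_var j) f = euler_reduct n k (commutator d (s_var j)) f"
proof -
  let ?X = "s_var j :: 'a series"
  let ?c = "\<lambda>i. commutator d (s_var i)"
  have T1: "euler_reduct n (Suc k) d (s_mult ?X f)
      = s_scale (of_nat (Suc k)) (d (s_mult ?X f)) - (\<Sum>i<n. ?c i (s_deriv i (s_mult ?X f)))"
    by (simp add: euler_reduct_def)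
  have T2: "s_mult ?X (euler_reduct n (Suc k) d f)
      = s_scale (of_nat (Suc k)) (s_mult ?X (d f)) - (\<Sum>i<n. s_mult ?X (?c i (s_deriv i f)))"
    by (simp add: euler_reduct_def s_mult_diff_right s_mult_sum_right s_scale_mult_right)
  have "commutator (euler_reduct n (Suc k) d) ?X f
      = euler_reduct n (Suc k) d (s_mult ?X f) - s_mult ?X (euler_reduct n (Suc k) d f)"
    by (rule commutator_eq)
  also have "\<dots> = s_scale (of_nat (Suc k)) (d (s_mult ?X f) - s_mult ?X (d f)) - ?c j f
      - (\<Sum>i<n. commutator (?c j) (s_var i) (s_deriv i f))"
    unfolding T1 T2 sum_commutator_deriv_mult_var[OF d j f] s_scale_diff by (simp add: algebra_simps)
  also have "\<dots> = s_scale (of_nat k) (?c j f) - (\<Sum>i<n. commutator (?c j) (s_var i) (s_deriv i f))"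
    by (simp add: commutator_eq s_scale_def fun_eq_iff algebra_simps)
  also have "\<dots> = euler_reduct n k (?c j) f"
    by (simp add: euler_reduct_def)
  finally show ?thesis .
qed

lemma euler_reduct_order: "diffop R k d \<Longrightarrow> diffop_less R k (euler_reduct n k d)"
proof (induction k arbitrary: d)
  case 0
  then obtain b where "\<And>f. f \<in> R \<Longrightarrow> d f = s_mult b f"
    by (auto elim: diffop_0E)
  then have "(\<Sum>i<n. commutator d (s_var i) (s_deriv i f)) = 0" if "f \<in> R" for f
    using that by (intro sum.neutral) (simp add: commutator_mult_op var_closed deriv_closed)
  then show ?case
    by (simp add: euler_reduct_def fun_eq_iff)
next
  case (Suc k)
  have d: "V_linear R d"
    using Suc.prems by (rule diffop_SucD)
  have c: "diffop R k (commutator d (s_var i))" if "i < n" for i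
    using diffop_SucD(2)[OF Suc.prems var_closed[OF that]] .
  have "diffop R (Suc k) (euler_reduct n (Suc k) d)"
    unfolding euler_reduct_def
  proof (intro diffop_diff diffop_scale diffop_sum)
    show "diffop R (Suc k) d"
      by (rule Suc.prems)
    show "diffop R (Suc k) (\<lambda>f. commutator d (s_var i) (s_deriv i f))" if "i \<in> {..<n}" for i
      using diffop_comp[OF c diffop_deriv, of i i] that by simp
  qed
  then have "diffop R k (euler_reduct n (Suc k) d)"
  proof (rule diffop_lower_order)
    fix j assume j: "j < n"
    have "diffop_less R k (euler_reduct n k (commutator d (s_var j)))"
      by (rule Suc.IH[OF c[OF j]])
    then show "diffop_less R k (commutator (euler_reduct n (Suc k) d) (s_var j))"
      by (rule diffop_less_cong) (simp add: euler_reduct_commutator_var[OF d j])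
  qed
  then show ?case
    by simp
qed

end

section \<open>Ideals stable under the partial derivatives\<close>

definition deriv_stable_ideal :: "'a::comm_ring_1 series set \<Rightarrow> nat \<Rightarrow> 'a series set \<Rightarrow> bool" where
  "deriv_stable_ideal R n J \<longleftrightarrow> J \<subseteq> R \<and> 0 \<in> J \<and> (\<forall>a\<in>J. \<forall>b\<in>J. a + b \<in> J) \<and>
     (\<forall>r\<in>R. \<forall>a\<in>J. s_mult r a \<in> J) \<and> (\<forall>i<n. \<forall>a\<in>J. s_deriv i a \<in> J)"

definition nat_saturated :: "'a::comm_ring_1 series set \<Rightarrow> 'a series set \<Rightarrow> bool" where
  "nat_saturated R J \<longleftrightarrow> (\<forall>k b. 0 < k \<longrightarrow> b \<in> R \<longrightarrow> s_scale (of_nat k) b \<in> J \<longrightarrow> b \<in> J)"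

context series_ring
begin

lemma deriv_stable_ideal_sum:
  "deriv_stable_ideal R n J \<Longrightarrow> (\<And>i. i \<in> A \<Longrightarrow> g i \<in> J) \<Longrightarrow> (\<Sum>i\<in>A. g i) \<in> J"
  by (induction A rule: infinite_finite_induct) (simp_all add: deriv_stable_ideal_def)

lemma diffop_preserves_deriv_stable_ideal:
  assumes J: "deriv_stable_ideal R n J" and saturated: "nat_saturated R J"
  shows "diffop R k d \<Longrightarrow> a \<in> J \<Longrightarrow> d a \<in> J"
proof (induction k arbitrary: d a rule: less_induct)
  case (less k)
  have a: "a \<in> R"
    using less.prems(2) J by (auto simp: deriv_stable_ideal_def)
  show ?case
  proof (cases k)
    case 0
    then obtain b where "b \<in> R" "\<And>f. f \<in> R \<Longrightarrow> d f = s_mult b f"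
      using less.prems(1) by (auto elim: diffop_0E)
    then show ?thesis
      using a J less.prems(2) by (simp add: deriv_stable_ideal_def)
  next
    case (Suc k')
    have "euler_reduct n k d a \<in> J"
      using less.IH[of k' "euler_reduct n k d" a] euler_reduct_order[OF less.prems(1)] Suc less.prems(2)
      by simp
    moreover have "commutator d (s_var i) (s_deriv i a) \<in> J" if "i < n" for i
      using less.IH[of k' "commutator d (s_var i)"] diffop_SucD(2)[of R k' d] less.prems Suc
        var_closed[OF that] J that by (simp add: deriv_stable_ideal_def)
    then have "(\<Sum>i<n. commutator d (s_var i) (s_deriv i a)) \<in> J"
      by (intro deriv_stable_ideal_sum[OF J]) simp
    ultimately have "euler_reduct n k d a + (\<Sum>i<n. commutator d (s_var i) (s_deriv i a)) \<in> J"
      using J by (simp add: deriv_stable_ideal_def)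
    then have "s_scale (of_nat k) (d a) \<in> J"
      by (simp add: euler_reduct_def)
    moreover have "0 < k"
      using Suc by simp
    ultimately show ?thesis
      using saturated diffop_closed[OF less.prems(1) a] unfolding nat_saturated_def by blast
  qed
qed

lemma D_submodule_if_nat_saturated:
  assumes J: "deriv_stable_ideal R n J" and "nat_saturated R J"
  shows "D_submodule R J"
proof -
  have "s_const 0 = (0 :: 'a series)"
    by (simp add: s_const_def fun_eq_iff)
  moreover have "(\<lambda>m. - a m) = s_mult (s_const (- 1)) a" for a :: "'a series"
    by (simp add: s_mult_const_left s_scale_def)
  moreover have "d a \<in> J" if "d \<in> Dring R" "a \<in> J" for d a
    using Dring_diffop[OF that(1)] diffop_preserves_deriv_stable_ideal[OF assms] that(2) by blast
  ultimately show ?thesis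
    using J const_closed by (simp add: D_submodule_def deriv_stable_ideal_def s_add_eq_plus)
qed

end

section \<open>The annihilator of a \<open>\<D>(R,V)\<close>-module\<close>

locale D_module_series = series_ring R n for R :: "'a::comm_ring_1 series set" and n +
  fixes act :: "('a series \<Rightarrow> 'a series) \<Rightarrow> 'm::ab_group_add \<Rightarrow> 'm"
  assumes D_module: "D_module R act"
begin

lemma act_D_add: "d \<in> Dring R \<Longrightarrow> e \<in> Dring R \<Longrightarrow> act (D_add R d e) x = act d x + act e x"
  using D_module unfolding D_module_def by blast

lemma act_D_mult: "d \<in> Dring R \<Longrightarrow> e \<in> Dring R \<Longrightarrow> act (D_mult R d e) x = act d (act e x)"
  using D_module unfolding D_module_def by blast

lemma act_zero: "d \<in> Dring R \<Longrightarrow> act d 0 = 0"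
proof -
  assume "d \<in> Dring R"
  then have "act d (0 + 0) = act d 0 + act d 0"
    using D_module unfolding D_module_def by blast
  then show ?thesis
    by simp
qed

lemma zero_in_Ann_R: "0 \<in> Ann_R R act"
proof -
  have "D_add R (mult_op R 0) (mult_op R 0) = mult_op R 0"
    by (simp add: D_add_def mult_op_def s_add_eq_plus restrict_def fun_eq_iff)
  then have "act (mult_op R 0) x = act (mult_op R 0) x + act (mult_op R 0) x" for x
    using act_D_add[OF mult_op_in_Dring mult_op_in_Dring, OF zero_closed zero_closed, of x] by simp
  then show ?thesis
    by (simp add: Ann_R_def zero_closed)
qed

lemma Ann_R_add: "a \<in> Ann_R R act \<Longrightarrow> b \<in> Ann_R R act \<Longrightarrow> a + b \<in> Ann_R R act"
proof -
  assume a: "a \<in> Ann_R R act" and b: "b \<in> Ann_R R act"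
  then have "a \<in> R" "b \<in> R"
    by (simp_all add: Ann_R_def)
  moreover have "mult_op R (a + b) = D_add R (mult_op R a) (mult_op R b)"
    by (simp add: D_add_def mult_op_def s_add_eq_plus s_mult_add_left restrict_def fun_eq_iff)
  ultimately show ?thesis
    using a b by (simp add: Ann_R_def add_closed act_D_add mult_op_in_Dring)
qed

lemma Ann_R_mult: "r \<in> R \<Longrightarrow> a \<in> Ann_R R act \<Longrightarrow> s_mult r a \<in> Ann_R R act"
proof -
  assume r: "r \<in> R" and a: "a \<in> Ann_R R act"
  then have "a \<in> R"
    by (simp add: Ann_R_def)
  moreover have "mult_op R (s_mult r a) = D_mult R (mult_op R r) (mult_op R a)"
    using \<open>a \<in> R\<close> by (simp add: D_mult_def compose_def mult_op_def s_mult_assoc mult_closed restrict_def fun_eq_iff)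
  ultimately show ?thesis
    using r a by (simp add: Ann_R_def mult_closed act_D_mult act_zero mult_op_in_Dring)
qed

lemma Ann_R_deriv: "a \<in> Ann_R R act \<Longrightarrow> s_deriv i a \<in> Ann_R R act"
proof -
  assume a: "a \<in> Ann_R R act"
  then have aR: "a \<in> R"
    by (simp add: Ann_R_def)
  let ?D = "restrict (s_deriv i) R" and ?A = "mult_op R a" and ?M = "mult_op R (s_const (- 1))"
  have D: "?D \<in> Dring R" and A: "?A \<in> Dring R" and M: "?M \<in> Dring R"
    using deriv_in_Dring mult_op_in_Dring aR const_closed by blast+
  have "s_mult (s_deriv i a) f = s_deriv i (s_mult a f) + s_mult (s_const (- 1)) (s_mult a (s_deriv i f))" for f
    by (simp add: s_deriv_mult s_mult_const_left s_scale_minus_one)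
  then have "mult_op R (s_deriv i a) = D_add R (D_mult R ?D ?A) (D_mult R ?M (D_mult R ?A ?D))"
    by (simp add: D_add_def D_mult_def compose_def mult_op_def s_add_eq_plus mult_closed aR deriv_closed
        restrict_def fun_eq_iff)
  then have "act (mult_op R (s_deriv i a)) x = act ?D (act ?A x) + act ?M (act ?A (act ?D x))" for x
    by (simp add: act_D_add act_D_mult D_mult_in_Dring D A M)
  then show ?thesis
    using a by (simp add: Ann_R_def aR deriv_closed act_zero D M)
qed

lemma deriv_stable_Ann_R: "deriv_stable_ideal R n (Ann_R R act)"
proof -
  have "Ann_R R act \<subseteq> R"
    by (auto simp: Ann_R_def)
  then show ?thesis
    by (simp add: deriv_stable_ideal_def zero_in_Ann_R Ann_R_add Ann_R_mult Ann_R_deriv)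
qed

end

section \<open>Saturation with respect to the uniformizer\<close>

lemma saturation_iff: "a \<in> saturation R I pi \<longleftrightarrow> a \<in> R \<and> (\<exists>m. s_scale (pi ^ m) a \<in> I)"
  by (simp add: saturation_def s_mult_const_right)

text \<open>In characteristic zero a positive integer is a unit times a power of the uniformizer.\<close>
lemma nat_saturated_saturation:
  fixes pi :: "'a::{idom, ring_char_0}"
  assumes pi: "dvr_uniformizer pi" and scale: "\<And>c a. a \<in> I \<Longrightarrow> s_scale c a \<in> I"
  shows "nat_saturated R (saturation R I pi)"
  unfolding nat_saturated_def
proof (intro allI impI)
  fix k b assume "0 < k" "b \<in> R" "s_scale (of_nat k) b \<in> saturation R I pi"
  obtain u e where "u dvd 1" and k: "of_nat k = u * pi ^ e"
    using pi \<open>0 < k\<close> unfolding dvr_uniformizer_def by (metis of_nat_0_eq_iff not_gr0)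
  then obtain v where v: "v * u = 1"
    by (metis dvdE mult.commute)
  obtain m where "s_scale (pi ^ m) (s_scale (of_nat k) b) \<in> I"
    using \<open>s_scale (of_nat k) b \<in> saturation R I pi\<close> by (auto simp: saturation_iff)
  then have "s_scale v (s_scale (pi ^ m) (s_scale (of_nat k) b)) \<in> I"
    by (rule scale)
  moreover have "v * (pi ^ m * (u * pi ^ e)) = (v * u) * pi ^ (m + e)"
    by (simp add: power_add ac_simps)
  then have "s_scale v (s_scale (pi ^ m) (s_scale (of_nat k) b)) = s_scale (pi ^ (m + e)) b"
    by (simp add: s_scale_scale k v)
  ultimately show "b \<in> saturation R I pi"
    using \<open>b \<in> R\<close> by (auto simp: saturation_iff)
qed

context series_ring
begin

lemma deriv_stable_ideal_scale: "deriv_stable_ideal R n I \<Longrightarrow> a \<in> I \<Longrightarrow> s_scale c a \<in> I"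
  using const_closed by (simp add: deriv_stable_ideal_def flip: s_mult_const_left)

lemma deriv_stable_saturation:
  assumes I: "deriv_stable_ideal R n I"
  shows "deriv_stable_ideal R n (saturation R I pi)"
proof -
  have "a + b \<in> saturation R I pi" if ab: "a \<in> saturation R I pi" "b \<in> saturation R I pi" for a b
  proof -
    obtain k l where "s_scale (pi ^ k) a \<in> I" "s_scale (pi ^ l) b \<in> I"
      using ab by (auto simp: saturation_iff)
    then have "s_scale (pi ^ l) (s_scale (pi ^ k) a) + s_scale (pi ^ k) (s_scale (pi ^ l) b) \<in> I"
      using I by (simp add: deriv_stable_ideal_def deriv_stable_ideal_scale)
    moreover have "s_scale (pi ^ l) (s_scale (pi ^ k) a) + s_scale (pi ^ k) (s_scale (pi ^ l) b)
        = s_scale (pi ^ (k + l)) (a + b)"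
      by (simp add: s_scale_def fun_eq_iff power_add algebra_simps)
    ultimately show ?thesis
      using ab by (auto simp: saturation_iff add_closed)
  qed
  moreover have "s_mult r a \<in> saturation R I pi" if r: "r \<in> R" and a: "a \<in> saturation R I pi" for r a
  proof -
    obtain m where "s_scale (pi ^ m) a \<in> I"
      using a by (auto simp: saturation_iff)
    then have "s_scale (pi ^ m) (s_mult r a) \<in> I"
      using I r by (simp add: deriv_stable_ideal_def s_scale_mult_right)
    then show ?thesis
      using r a by (auto simp: saturation_iff mult_closed)
  qed
  moreover have "s_deriv i a \<in> saturation R I pi" if i: "i < n" and a: "a \<in> saturation R I pi" for i a
  proof -
    obtain m where "s_scale (pi ^ m) a \<in> I"
      using a by (auto simp: saturation_iff)
    then have "s_scale (pi ^ m) (s_deriv i a) \<in> I"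
      using I i by (simp add: deriv_stable_ideal_def flip: s_deriv_scale)
    then show ?thesis
      using a by (auto simp: saturation_iff deriv_closed)
  qed
  moreover have "0 \<in> saturation R I pi"
    using I zero_closed by (auto simp: saturation_iff deriv_stable_ideal_def intro!: exI[of _ 0])
  ultimately show ?thesis
    by (auto simp: deriv_stable_ideal_def saturation_iff)
qed

end

theorem lemma3p3:
  fixes pi :: "'a::{idom, ring_char_0}" and p n :: nat
    and R :: "'a series set"
    and act :: "('a series \<Rightarrow> 'a series) \<Rightarrow> 'm::ab_group_add \<Rightarrow> 'm"
  assumes "dvr_uniformizer pi"
    and "residue_char pi p"
    and "R = R_ps n \<or> R = R_poly n"
    and "D_module R act"
  shows "D_submodule R (saturation R (Ann_R R act) pi)"
proof -
  interpret D_module_series R n act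
    using assms(3,4) by unfold_locales
  have I: "deriv_stable_ideal R n (Ann_R R act)"
    by (rule deriv_stable_Ann_R)
  show ?thesis
  proof (rule D_submodule_if_nat_saturated)
    show "deriv_stable_ideal R n (saturation R (Ann_R R act) pi)"
      using I by (rule deriv_stable_saturation)
    show "nat_saturated R (saturation R (Ann_R R act) pi)"
      using assms(1) deriv_stable_ideal_scale[OF I] by (rule nat_saturated_saturation)
  qed
qed

end
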